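(* Let $\Gamma=(N,A,u)$ be a finite normal form game that is standard symmetric, i.e. there exist a matching $M$ of $A_1,\dots,A_n$ and a transitive subgroup $T\le S_N$ such that $M_T\le\operatorname{Aut}(\Gamma)$. Then there exists a matching $M'$ of $A_1,\dots,A_n$ such that for each $s\in M'$, $u_i(s)=u_j(s)$ for all $i,j\in N$.
   Context: A matching of $A_1,\dots,A_n$ is $M\subseteq\times_iA_i$ such that for each $i$ and $a_i\in A_i$ exactly one $s\in M$ has $s_i=a_i$; $M_{ij}:A_i\to A_j$ sends $a_i$ to the unique $a_j$ with some $s\in M$ having $s_i=a_i$, $s_j=a_j$; for $\pi\in S_N$, $M_\pi$ is the game bijection $(\pi;(M_{i\pi(i)})_{i\in N})$ and $M_T=\{M_\pi:\pi\in T\}$. A game bijection $g=(\pi;(\tau_i)_{i\in N})$ of $\Gamma$ ($\pi\in S_N$, bijections $\tau_i:A_i\to A_{\pi(i)}$) acts by $g(i)=\pi(i)$ and $g(s)=(\tau_{\pi^{-1}(j)}(s_{\pi^{-1}(j)}))_{j\in N}$; it is an automorphism if $u_i(s)=u_{g(i)}(g(s))$ for all $i\in N$, $s\in A$; $\operatorname{Aut}(\Gamma)$ is the group of automorphisms. *)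

theory Defs
  imports Complex_Main "HOL-Algebra.Bij"
begin

definition profiles :: "('p \<Rightarrow> 'a set) \<Rightarrow> ('p \<Rightarrow> 'a) set" where
  "profiles A = {s. \<forall>i. s i \<in> A i}"

definition matching :: "('p \<Rightarrow> 'a set) \<Rightarrow> ('p \<Rightarrow> 'a) set \<Rightarrow> bool" where
  "matching A M \<longleftrightarrow> M \<subseteq> profiles A \<and> (\<forall>i. \<forall>a\<in>A i. \<exists>!s. s \<in> M \<and> s i = a)"

definition mmap :: "('p \<Rightarrow> 'a) set \<Rightarrow> 'p \<Rightarrow> 'p \<Rightarrow> 'a \<Rightarrow> 'a" where
  "mmap M i j a = (THE b. \<exists>s\<in>M. s i = a \<and> s j = b)"

definition gb_apply :: "('p \<Rightarrow> 'p) \<Rightarrow> ('p \<Rightarrow> 'a \<Rightarrow> 'a) \<Rightarrow> ('p \<Rightarrow> 'a) \<Rightarrow> ('p \<Rightarrow> 'a)" where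
  "gb_apply p t s = (\<lambda>j. t (inv_into UNIV p j) (s (inv_into UNIV p j)))"

definition automorphism ::
  "('p \<Rightarrow> 'a set) \<Rightarrow> ('p \<Rightarrow> ('p \<Rightarrow> 'a) \<Rightarrow> real) \<Rightarrow> ('p \<Rightarrow> 'p) \<Rightarrow> ('p \<Rightarrow> 'a \<Rightarrow> 'a) \<Rightarrow> bool" where
  "automorphism A u p t \<longleftrightarrow>
     bij p \<and> (\<forall>i. bij_betw (t i) (A i) (A (p i))) \<and>
     (\<forall>i. \<forall>s\<in>profiles A. u i s = u (p i) (gb_apply p t s))"

end

theory Submission
  imports Defs
begin

text \<open>The matching M itself works. Every profile s in M is a fixed point of each game
  bijection M_\<pi>, since M_\<pi> sends the \<pi>(i)-th coordinate to M_{i\<pi>(i)}(s_i) = s_{\<pi>(i)}.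
  If M_\<pi> is an automorphism this gives u_i(s) = u_{\<pi>(i)}(s), and transitivity of T
  lets \<pi>(i) be any player j.\<close>

lemma mmap_matching_member:
  assumes match: "matching A M" and s: "s \<in> M"
  shows "mmap M i j (s i) = s j"
  unfolding mmap_def
proof (rule the_equality)
  show "\<exists>s'\<in>M. s' i = s i \<and> s' j = s j" using s by blast
next
  fix b assume "\<exists>s'\<in>M. s' i = s i \<and> s' j = b"
  then obtain s' where s': "s' \<in> M" "s' i = s i" "s' j = b" by blast
  have "s i \<in> A i" using match s unfolding matching_def profiles_def by blast
  then have "s' = s" using match s s' unfolding matching_def by blast
  then show "b = s j" using s' by simp
qed

lemma gb_apply_mmap_fixes_member:
  assumes "bij p" and "matching A M" and "s \<in> M"
  shows "gb_apply p (\<lambda>i. mmap M i (p i)) s = s"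
proof
  fix k
  have "p (inv_into UNIV p k) = k" using \<open>bij p\<close> by (simp add: bij_is_surj f_inv_into_f)
  then show "gb_apply p (\<lambda>i. mmap M i (p i)) s k = s k"
    unfolding gb_apply_def using mmap_matching_member[OF assms(2,3)] by metis
qed

lemma automorphism_payoff_at_fixed_profile:
  assumes "automorphism A u p t" and "s \<in> profiles A" and "gb_apply p t s = s"
  shows "u i s = u (p i) s"
  using assms unfolding automorphism_def by metis

theorem corollary5p3:
  fixes A :: "'p::finite \<Rightarrow> 'a set"
    and u :: "'p \<Rightarrow> ('p \<Rightarrow> 'a) \<Rightarrow> real"
    and M :: "('p \<Rightarrow> 'a) set"
    and T :: "('p \<Rightarrow> 'p) set"
  assumes fin: "\<And>i. finite (A i)"
    and nonempty: "\<And>i. A i \<noteq> {}"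
    and match: "matching A M"
    and subgrp: "subgroup T (BijGroup (UNIV :: 'p set))"
    and trans: "\<And>i j. \<exists>p\<in>T. p i = j"
    and aut: "\<And>p. p \<in> T \<Longrightarrow> automorphism A u p (\<lambda>i. mmap M i (p i))"
  shows "\<exists>M'. matching A M' \<and> (\<forall>s\<in>M'. \<forall>i j. u i s = u j s)"
proof (intro exI conjI ballI allI)
  show "matching A M" by (rule match)
next
  fix s i j assume s: "s \<in> M"
  obtain p where p: "p \<in> T" "p i = j" using trans by blast
  have au: "automorphism A u p (\<lambda>i. mmap M i (p i))" using aut p(1) .
  have "bij p" using au unfolding automorphism_def by blast
  moreover have "s \<in> profiles A" using match s unfolding matching_def by blast
  ultimately have "u i s = u (p i) s"
    using automorphism_payoff_at_fixed_profile[OF au] gb_apply_mmap_fixes_member match s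
    by blast
  then show "u i s = u j s" using p(2) by simp
qed

end
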